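(* Let $\mathbb{K}$ be a field of characteristic $0$. For every $d\geq 4$ there is a positive integer $r_0$ such that for all $r\geq r_0$ there exists a standard graded Artinian Gorenstein $\mathbb{K}$-algebra of socle degree $d$ and codimension $r$ whose Hilbert function $(1,h_1,\ldots,h_d)$ is totally non-unimodal, i.e. $h_1>h_2>\cdots>h_{\lfloor d/2\rfloor}$. *)

theory Defs
  imports Complex_Main "HOL-Library.Poly_Mapping"
begin

text \<open>Polynomials over a field 'k in variables x_0, x_1, ... : finitely supported maps
  from monomials (exponent vectors nat =>0 nat) to coefficients.\<close>
type_synonym 'k mpoly = "(nat \<Rightarrow>\<^sub>0 nat) \<Rightarrow>\<^sub>0 'k"

definition mdeg :: "(nat \<Rightarrow>\<^sub>0 nat) \<Rightarrow> nat" where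
  "mdeg m = (\<Sum>i\<in>Poly_Mapping.keys m. Poly_Mapping.lookup m i)"

definition pscale :: "'k::field \<Rightarrow> 'k mpoly \<Rightarrow> 'k mpoly" where
  "pscale c p = Poly_Mapping.map (\<lambda>x. c * x) p"

definition pdim :: "'k::field mpoly set \<Rightarrow> nat" where
  "pdim S = vector_space.dim pscale S"

definition polyring :: "nat \<Rightarrow> 'k::field mpoly set" where
  "polyring r = {p. \<forall>m\<in>Poly_Mapping.keys p. Poly_Mapping.keys m \<subseteq> {..<r}}"

definition hom_comp :: "nat \<Rightarrow> nat \<Rightarrow> 'k::field mpoly set" where
  "hom_comp r i = {p \<in> polyring r. \<forall>m\<in>Poly_Mapping.keys p. mdeg m = i}"

definition hpart :: "nat \<Rightarrow> 'k::field mpoly \<Rightarrow> 'k mpoly" where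
  "hpart i p = (\<Sum>m\<in>{m\<in>Poly_Mapping.keys p. mdeg m = i}. Poly_Mapping.single m (Poly_Mapping.lookup p m))"

definition var :: "nat \<Rightarrow> 'k::field mpoly" where
  "var j = Poly_Mapping.single (Poly_Mapping.single j 1) 1"

definition is_ideal :: "nat \<Rightarrow> 'k::field mpoly set \<Rightarrow> bool" where
  "is_ideal r I \<longleftrightarrow> I \<subseteq> polyring r \<and> 0 \<in> I \<and>
     (\<forall>p\<in>I. \<forall>q\<in>I. p + q \<in> I) \<and> (\<forall>f\<in>polyring r. \<forall>p\<in>I. f * p \<in> I)"

definition homogeneous_ideal :: "nat \<Rightarrow> 'k::field mpoly set \<Rightarrow> bool" where
  "homogeneous_ideal r I \<longleftrightarrow> is_ideal r I \<and> (\<forall>p\<in>I. \<forall>i. hpart i p \<in> I)"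

text \<open>Hilbert function of A = R/I: h_i = dim_K A_i = dim R_i - dim I_i\<close>
definition hilb :: "nat \<Rightarrow> 'k::field mpoly set \<Rightarrow> nat \<Rightarrow> nat" where
  "hilb r I i = pdim (hom_comp r i :: 'k mpoly set) - pdim (hom_comp r i \<inter> I)"

text \<open>(I : m), the preimage in R of the socle of A = R/I\<close>
definition socle_lift :: "nat \<Rightarrow> 'k::field mpoly set \<Rightarrow> 'k mpoly set" where
  "socle_lift r I = {p \<in> polyring r. \<forall>j<r. var j * p \<in> I}"

text \<open>A = R/I is a standard graded Artinian K-algebra of socle degree d
  (A_d \<noteq> 0 and A_i = 0 for i > d)\<close>
definition artinian_socle_degree :: "nat \<Rightarrow> 'k::field mpoly set \<Rightarrow> nat \<Rightarrow> bool" where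
  "artinian_socle_degree r I d \<longleftrightarrow> homogeneous_ideal r I \<and>
     hilb r I d \<noteq> 0 \<and> (\<forall>i>d. hom_comp r i \<subseteq> I)"

text \<open>dimension of the socle (0 :_A m) = (I : m)/I of the graded Artinian algebra A = R/I of
  socle degree d, computed degreewise (components above d vanish)\<close>
definition socle_dim :: "nat \<Rightarrow> 'k::field mpoly set \<Rightarrow> nat \<Rightarrow> nat" where
  "socle_dim r I d = (\<Sum>i\<le>d. pdim (hom_comp r i \<inter> socle_lift r I) - pdim (hom_comp r i \<inter> I))"

definition AG_algebra :: "nat \<Rightarrow> 'k::field mpoly set \<Rightarrow> nat \<Rightarrow> bool" where
  "AG_algebra r I d \<longleftrightarrow> artinian_socle_degree r I d \<and> socle_dim r I d = 1"

end

(*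
  For a form F of degree d, R/Ann(F) is Artinian Gorenstein of socle degree d, and its Hilbert
  function h_i is the dimension of the space of contractions of F by forms of degree i. If F is a
  sum of distinct monomials, the contraction by a monomial x^b is determined by the set of
  cofactors g with x^g x^b in supp F; when these sets are pairwise equal or disjoint, h_i is the
  number of distinct nonempty ones.

  Take variables x_0, x_1, x_2 and y_k, and F = sum_a x^a y_(idx a) + sum_(k in Z) y_k^d, where a
  runs over the C(d+1,2) monomials of degree d - 1 in the x's, idx is injective and Z collects the
  remaining y's. For 0 < i < d the x-monomials of degree i have pairwise different cofactor sets,
  while a monomial involving a y has a single cofactor, which is either a monomial of degree d - i
  in the x's or some y_k^(d-i). Hence h_i = C(i+2,2) + C(d-i+2,2) + |Z|, h_1 = r, and h_i strictly
  decreases for i < d/2.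
*)

theory Submission
  imports Defs "HOL-Library.Function_Algebras" "HOL-Library.Indicator_Function"
begin

section \<open>Linear algebra\<close>

lemma (in vector_space) span_inter_span_disjoint:
  assumes C: "independent C" "finite C" and BD: "B \<subseteq> C" "D \<subseteq> C" "B \<inter> D = {}"
  shows "span B \<inter> span D = {0}"
proof -
  have "x = 0" if x: "x \<in> span B" "x \<in> span D" for x
  proof -
    have fin: "finite B" "finite D" using BD C finite_subset by blast+
    obtain u where u: "x = (\<Sum>v\<in>B. u v *s v)" using x(1) span_finite[OF fin(1)] by auto
    obtain w where w: "x = (\<Sum>v\<in>D. w v *s v)" using x(2) span_finite[OF fin(2)] by auto
    define c where "c v = (if v \<in> B then u v else - w v)" for v
    have "(\<Sum>v\<in>B \<union> D. c v *s v) = (\<Sum>v\<in>B. c v *s v) + (\<Sum>v\<in>D. c v *s v)"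
      by (rule sum.union_disjoint) (use fin BD in auto)
    also have "(\<Sum>v\<in>B. c v *s v) = x" unfolding u by (rule sum.cong) (auto simp: c_def)
    also have "(\<Sum>v\<in>D. c v *s v) = - x" unfolding w
      by (subst sum_negf[symmetric], rule sum.cong) (use BD in \<open>auto simp: c_def\<close>)
    finally have "(\<Sum>v\<in>B \<union> D. c v *s v) = 0" by simp
    then have "c v = 0" if "v \<in> B" for v
      using independentD[OF C(1), of "B \<union> D" c v] fin BD that by auto
    then show ?thesis unfolding u by (simp add: c_def)
  qed
  then show ?thesis using span_zero by blast
qed

lemma (in vector_space_pair) dim_kernel_plus_dim_image:
  assumes f: "Vector_Spaces.linear s1 s2 f" and V: "vs1.subspace V" and W: "finite W" "V \<subseteq> vs1.span W"
  shows "vs1.dim V = vs1.dim {v\<in>V. f v = 0} + vs2.dim (f ` V)"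
proof -
  let ?K = "{v\<in>V. f v = 0}"
  obtain B where B: "B \<subseteq> ?K" "vs1.independent B" "?K \<subseteq> vs1.span B"
    using vs1.maximal_independent_subset[of ?K] by blast
  obtain C where C: "vs1.independent C" "C \<subseteq> V" "B \<subseteq> C" "V \<subseteq> vs1.span C"
    using vs1.maximal_independent_subset_extend[of B V] B by (metis (no_types, lifting) mem_Collect_eq subset_iff)
  have finC: "finite C" using vs1.independent_span_bound[OF W(1) C(1)] C(2) W(2) by auto
  define D where "D = C - B"
  have "f ` V \<subseteq> vs2.span (f ` D)"
  proof -
    have "f c \<in> vs2.span (f ` D)" if "c \<in> C" for c
      using B(1) that by (cases "c \<in> B") (auto simp: D_def vs2.span_zero intro: vs2.span_base)
    then have "f ` C \<subseteq> vs2.span (f ` D)" by blast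
    then have "f ` vs1.span C \<subseteq> vs2.span (f ` D)"
      unfolding linear_span_image[OF f, symmetric] by (simp add: vs2.span_minimal)
    then show ?thesis using C(4) by blast
  qed
  moreover have inj: "inj_on f (vs1.span D)"
  proof (subst linear_inj_on_iff_eq_0[OF f vs1.subspace_span], intro ballI impI)
    fix x assume x: "x \<in> vs1.span D" "f x = 0"
    have "x \<in> V" using x(1) vs1.span_mono[of D C] C(2,4) vs1.span_minimal[OF C(2) V] D_def by auto
    then have "x \<in> vs1.span B" using x(2) B(3) by auto
    then show "x = 0"
      using vs1.span_inter_span_disjoint[OF C(1) finC C(3), of D] x(1) D_def by auto
  qed
  moreover have "vs2.independent (f ` D)"
    using linear_independent_injective_image[OF f _ inj] vs1.independent_mono[OF C(1)] D_def by blast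
  ultimately have "vs2.dim (f ` V) = card (f ` D)"
    using C(2) D_def by (intro vs2.basis_card_eq_dim[symmetric]) auto
  also have "\<dots> = card D"
    using inj by (simp add: card_image inj_on_subset vs1.span_superset)
  finally show ?thesis
    using vs1.basis_card_eq_dim[OF C(2,4,1)] vs1.basis_card_eq_dim[OF B(1,3,2)]
      card_Diff_subset[OF finite_subset[OF C(3) finC] C(3)] card_mono[OF finC C(3)]
    by (simp add: D_def)
qed

lemma lookup_pscale [simp]: "Poly_Mapping.lookup (pscale c p) m = c * Poly_Mapping.lookup p m"
  unfolding pscale_def by transfer (simp add: when_def)

interpretation P: vector_space "pscale :: 'k::field \<Rightarrow> 'k mpoly \<Rightarrow> 'k mpoly"
  by unfold_locales (auto intro!: poly_mapping_eqI simp: lookup_add algebra_simps)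

definition fscale :: "'k::field \<Rightarrow> ('a \<Rightarrow> 'k) \<Rightarrow> ('a \<Rightarrow> 'k)" where
  "fscale c f = (\<lambda>x. c * f x)"

interpretation Fn: vector_space "fscale :: 'k::field \<Rightarrow> ('a \<Rightarrow> 'k) \<Rightarrow> ('a \<Rightarrow> 'k)"
  by unfold_locales (auto simp: fscale_def algebra_simps)

interpretation PFn: vector_space_pair "pscale :: 'k::field \<Rightarrow> 'k mpoly \<Rightarrow> 'k mpoly"
  "fscale :: 'k::field \<Rightarrow> ('a \<Rightarrow> 'k) \<Rightarrow> ('a \<Rightarrow> 'k)" ..

lemma sum_apply: "(\<Sum>h\<in>A. f h) x = (\<Sum>h\<in>A. f h x)"
  by (induction A rule: infinite_finite_induct) auto

lemma independent_indicators_disjoint: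
  assumes "finite TT" "pairwise disjnt TT" "{} \<notin> TT"
  shows "Fn.independent ((\<lambda>T. indicator T :: 'a \<Rightarrow> 'k::field) ` TT)"
proof (rule Fn.independent_if_scalars_zero)
  let ?G = "(\<lambda>T. indicator T :: 'a \<Rightarrow> 'k) ` TT"
  show fin: "finite ?G" using assms(1) by simp
  fix u v assume sum0: "(\<Sum>w\<in>?G. fscale (u w) w) = 0" and v: "v \<in> ?G"
  obtain T where T: "T \<in> TT" "v = indicator T" using v by blast
  obtain x where x: "x \<in> T" using T(1) assms(3) by (metis ex_in_conv)
  have "w x = 0" if "w \<in> ?G - {v}" for w
    using that assms(2) T x by (auto simp: pairwise_def disjnt_def indicator_def) (metis IntI empty_iff)
  then have "(\<Sum>w\<in>?G - {v}. u w * w x) = 0" by (intro sum.neutral) simp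
  moreover have "0 = (\<Sum>w\<in>?G. fscale (u w) w) x" using sum0 by simp
  also have "\<dots> = u v * v x + (\<Sum>w\<in>?G - {v}. u w * w x)"
    unfolding sum_apply fscale_def by (rule sum.remove[OF fin v])
  ultimately show "u v = 0" using T x by simp
qed

lemma dim_indicators_disjoint:
  assumes "finite TT" "pairwise disjnt TT"
  shows "Fn.dim ((\<lambda>T. indicator T :: 'a \<Rightarrow> 'k::field) ` TT) = card (TT - {{}})"
proof -
  let ?ind = "\<lambda>T. indicator T :: 'a \<Rightarrow> 'k"
  have inj: "inj ?ind"
    by (rule injI) (metis indicator_eq_1_iff subsetI subset_antisym)
  have "?ind T = 0 \<longleftrightarrow> T = {}" for T
    by (auto simp: fun_eq_iff indicator_eq_0_iff)
  then have "?ind ` TT - {0} = ?ind ` (TT - {{}})" by auto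
  then have "Fn.dim (?ind ` TT) = Fn.dim (?ind ` (TT - {{}}))"
    by (metis Fn.span_delete_0 Fn.span_eq_dim)
  also have "\<dots> = card (?ind ` (TT - {{}}))"
    using assms by (intro Fn.dim_eq_card_independent independent_indicators_disjoint)
      (auto intro: pairwise_subset)
  also have "\<dots> = card (TT - {{}})"
    using inj by (simp add: card_image inj_on_subset)
  finally show ?thesis .
qed

section \<open>Monomials and homogeneous components\<close>

lemma keys_add_nat:
  "Poly_Mapping.keys (a + b :: 'a \<Rightarrow>\<^sub>0 nat) = Poly_Mapping.keys a \<union> Poly_Mapping.keys b"
  by (auto simp: in_keys_iff lookup_add)

lemma mdeg_eq_sum:
  assumes "finite A" "Poly_Mapping.keys m \<subseteq> A"
  shows "mdeg m = (\<Sum>i\<in>A. Poly_Mapping.lookup m i)"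
  unfolding mdeg_def by (rule sum.mono_neutral_left) (use assms in \<open>auto simp: in_keys_iff\<close>)

lemma mdeg_add [simp]: "mdeg (a + b) = mdeg a + mdeg b"
proof -
  let ?A = "Poly_Mapping.keys a \<union> Poly_Mapping.keys b"
  have "mdeg (a + b) = (\<Sum>i\<in>?A. Poly_Mapping.lookup (a + b) i)"
    by (rule mdeg_eq_sum) (auto simp: keys_add_nat)
  also have "\<dots> = mdeg a + mdeg b"
    by (simp add: lookup_add sum.distrib mdeg_eq_sum[of ?A])
  finally show ?thesis .
qed

lemma mdeg_single [simp]: "mdeg (Poly_Mapping.single i k) = k"
  unfolding mdeg_def by simp

lemma mdeg_zero [simp]: "mdeg 0 = 0"
  unfolding mdeg_def by simp

lemma mdeg_eq_0_iff [simp]: "mdeg m = 0 \<longleftrightarrow> m = 0"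
  unfolding mdeg_def by (auto simp: in_keys_iff intro: poly_mapping_eqI)

lemma lookup_le_mdeg: "Poly_Mapping.lookup m i \<le> mdeg m"
  unfolding mdeg_def by (cases "i \<in> Poly_Mapping.keys m") (auto simp: in_keys_iff intro: member_le_sum)

definition mons :: "nat \<Rightarrow> nat \<Rightarrow> (nat \<Rightarrow>\<^sub>0 nat) set" where
  "mons r i = {m. Poly_Mapping.keys m \<subseteq> {..<r} \<and> mdeg m = i}"

lemma finite_mons: "finite (mons r i)"
proof -
  let ?F = "{f. \<forall>x. (x \<in> {..<r} \<longrightarrow> f x \<in> {..i}) \<and>
    (x \<notin> {..<r} \<longrightarrow> f x = (0::nat))}"
  have "mons r i \<subseteq> Abs_poly_mapping ` ?F"
  proof
    fix m assume "m \<in> mons r i"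
    then have "Poly_Mapping.lookup m \<in> ?F"
      using lookup_le_mdeg[of m] by (auto simp: mons_def in_keys_iff subset_iff)
    then show "m \<in> Abs_poly_mapping ` ?F" by (rule image_eqI[rotated]) simp
  qed
  moreover have "finite ?F" by (rule finite_set_of_finite_funs) auto
  ultimately show ?thesis using finite_subset by blast
qed

lemma mons_mono: "n \<le> r \<Longrightarrow> mons n i \<subseteq> mons r i"
  by (auto simp: mons_def)

lemma lookup_mons_above: "a \<in> mons n k \<Longrightarrow> n \<le> v \<Longrightarrow> Poly_Mapping.lookup a v = 0"
  by (auto simp: mons_def in_keys_iff subset_iff not_less[symmetric])

lemma single_in_mons: "j < n \<Longrightarrow> Poly_Mapping.single j k \<in> mons n k"
  by (simp add: mons_def)

lemma mons_one: "mons r 1 = (\<lambda>j. Poly_Mapping.single j 1) ` {..<r}"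
proof (intro equalityI subsetI)
  fix m assume m: "m \<in> mons r 1"
  then have "m \<noteq> 0" by (auto simp: mons_def)
  then obtain j where j: "j \<in> Poly_Mapping.keys m" by (metis ex_in_conv keys_eq_empty)
  have "Poly_Mapping.lookup m j + (\<Sum>k\<in>Poly_Mapping.keys m - {j}. Poly_Mapping.lookup m k) = 1"
    using m j unfolding mons_def mdeg_def by (simp add: sum.remove)
  moreover have "Poly_Mapping.lookup m j \<noteq> 0" using j by (simp add: in_keys_iff)
  ultimately have one: "Poly_Mapping.lookup m j = 1"
    and rest: "(\<Sum>k\<in>Poly_Mapping.keys m - {j}. Poly_Mapping.lookup m k) = 0"
    by linarith+
  have "Poly_Mapping.keys m \<subseteq> {j}"
    using rest by (auto simp: sum_eq_0_iff in_keys_iff)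
  then have "Poly_Mapping.lookup m k = Poly_Mapping.lookup (Poly_Mapping.single j 1) k" for k
    using one by (cases "k = j") (auto simp: in_keys_iff lookup_single)
  then have "m = Poly_Mapping.single j 1" by (rule poly_mapping_eqI)
  then show "m \<in> (\<lambda>j. Poly_Mapping.single j 1) ` {..<r}" using m j by (auto simp: mons_def)
qed (auto simp: mons_def)

lemma card_mons_one: "card (mons r 1) = r"
proof -
  have "inj_on (\<lambda>j. Poly_Mapping.single j (1::nat)) {..<r}"
    by (rule inj_onI) (metis lookup_single_eq lookup_single_not_eq zero_neq_one)
  then show ?thesis unfolding mons_one by (simp only: card_image card_lessThan)
qed

lemma poly_mapping_sum_monomials:
  "p = (\<Sum>m\<in>Poly_Mapping.keys p. Poly_Mapping.single m (Poly_Mapping.lookup p m))"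
proof (rule poly_mapping_eqI)
  fix k
  have "Poly_Mapping.lookup (\<Sum>m\<in>Poly_Mapping.keys p. Poly_Mapping.single m (Poly_Mapping.lookup p m)) k
      = (\<Sum>m\<in>Poly_Mapping.keys p. if m = k then Poly_Mapping.lookup p m else 0)"
    unfolding lookup_sum lookup_single when_def by (rule sum.cong) auto
  then show "Poly_Mapping.lookup p k
      = Poly_Mapping.lookup (\<Sum>m\<in>Poly_Mapping.keys p. Poly_Mapping.single m (Poly_Mapping.lookup p m)) k"
    by (simp add: sum.delta in_keys_iff)
qed

lemma polyring_add: "p \<in> polyring r \<Longrightarrow> q \<in> polyring r \<Longrightarrow> p + q \<in> polyring r"
  unfolding polyring_def using keys_add[of p q] by blast

lemma polyring_mult: "p \<in> polyring r \<Longrightarrow> q \<in> polyring r \<Longrightarrow> p * q \<in> polyring r"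
  unfolding polyring_def using keys_mult[of p q] by (fastforce simp: keys_add_nat)

lemma var_in_polyring: "j < r \<Longrightarrow> var j \<in> polyring r"
  unfolding polyring_def var_def by simp

lemma monomial_in_hom_comp: "m \<in> mons r i \<Longrightarrow> Poly_Mapping.single m 1 \<in> hom_comp r i"
  by (simp add: hom_comp_def polyring_def mons_def)

lemma var_mult_in_hom_comp:
  assumes p: "p \<in> hom_comp r i" and j: "j < r"
  shows "var j * p \<in> hom_comp r (Suc i)"
proof -
  have "var j * p \<in> polyring r"
    using p polyring_mult[OF var_in_polyring[OF j]] by (auto simp: hom_comp_def)
  moreover have "mdeg m = Suc i" if "m \<in> Poly_Mapping.keys (var j * p)" for m
    using keys_mult[of "var j" p] that p by (auto simp: var_def hom_comp_def)
  ultimately show ?thesis by (simp add: hom_comp_def)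
qed

lemma subspace_hom_comp: "P.subspace (hom_comp r i :: 'k::field mpoly set)"
  unfolding P.subspace_def
proof (intro conjI ballI allI)
  show "0 \<in> hom_comp r i" by (simp add: hom_comp_def polyring_def)
  fix p q :: "'k mpoly" assume "p \<in> hom_comp r i" "q \<in> hom_comp r i"
  then show "p + q \<in> hom_comp r i"
    using keys_add[of p q] polyring_add by (fastforce simp: hom_comp_def)
next
  fix c and p :: "'k mpoly" assume "p \<in> hom_comp r i"
  moreover have "Poly_Mapping.keys (pscale c p) \<subseteq> Poly_Mapping.keys p"
    by (auto simp: in_keys_iff)
  ultimately show "pscale c p \<in> hom_comp r i"
    unfolding hom_comp_def polyring_def by blast
qed

lemma hom_comp_subset_span_mons:
  "(hom_comp r i :: 'k::field mpoly set) \<subseteq> P.span ((\<lambda>m. Poly_Mapping.single m 1) ` mons r i)"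
proof
  fix p :: "'k mpoly" assume p: "p \<in> hom_comp r i"
  let ?M = "(\<lambda>m. Poly_Mapping.single m 1) ` mons r i"
  have "Poly_Mapping.single m (Poly_Mapping.lookup p m) \<in> P.span ?M" if "m \<in> Poly_Mapping.keys p" for m
  proof -
    have "m \<in> mons r i" using p that by (auto simp: hom_comp_def polyring_def mons_def)
    then have "pscale (Poly_Mapping.lookup p m) (Poly_Mapping.single m 1) \<in> P.span ?M"
      by (intro P.span_scale P.span_base) simp
    moreover have "pscale c (Poly_Mapping.single m 1) = Poly_Mapping.single m c" for c :: 'k
      by (rule poly_mapping_eqI) (simp add: lookup_single when_def)
    ultimately show ?thesis by simp
  qed
  then have "(\<Sum>m\<in>Poly_Mapping.keys p. Poly_Mapping.single m (Poly_Mapping.lookup p m)) \<in> P.span ?M"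
    by (rule P.span_sum)
  then show "p \<in> P.span ((\<lambda>m. Poly_Mapping.single m 1) ` mons r i)"
    by (subst poly_mapping_sum_monomials)
qed

section \<open>Inverse systems of sums of monomials\<close>

text \<open>For a set \<open>S\<close> of monomials let \<open>F\<^sub>S = \<Sum>s\<in>S. Y\<^sup>s\<close> in the dual ring.
  \<open>contract S p g\<close> is the coefficient of \<open>Y\<^sup>g\<close> in the contraction \<open>p \<circ> F\<^sub>S\<close>,
  so that \<open>ann r S\<close> is the annihilator of \<open>F\<^sub>S\<close>.\<close>

definition contract ::
    "(nat \<Rightarrow>\<^sub>0 nat) set \<Rightarrow> 'k::field mpoly \<Rightarrow> (nat \<Rightarrow>\<^sub>0 nat) \<Rightarrow> 'k" where
  "contract S p g = (\<Sum>a\<in>S. Poly_Mapping.lookup (Poly_Mapping.single g 1 * p) a)"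

definition ann :: "nat \<Rightarrow> (nat \<Rightarrow>\<^sub>0 nat) set \<Rightarrow> 'k::field mpoly set" where
  "ann r S = {p \<in> polyring r. contract S p = 0}"

definition cofactors ::
    "(nat \<Rightarrow>\<^sub>0 nat) set \<Rightarrow> (nat \<Rightarrow>\<^sub>0 nat) \<Rightarrow> (nat \<Rightarrow>\<^sub>0 nat) set" where
  "cofactors S b = {g. g + b \<in> S}"

lemma lookup_single_mult:
  fixes p :: "('a::cancel_comm_monoid_add \<Rightarrow>\<^sub>0 'b::semiring_0)"
  shows "Poly_Mapping.lookup (Poly_Mapping.single g c * p) a =
    (if \<exists>q. a = g + q then c * Poly_Mapping.lookup p (a - g) else 0)"
proof -
  have "Poly_Mapping.lookup (Poly_Mapping.single g c * p) a =
      (\<Sum>q. c * Poly_Mapping.lookup p q when a = g + q)"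
    by (simp add: lookup_mult lookup_single when_mult Sum_any_right_distrib mult_when)
  also have "\<dots> = (if \<exists>q. a = g + q then c * Poly_Mapping.lookup p (a - g) else 0)"
  proof (cases "\<exists>q. a = g + q")
    case True
    then obtain q0 where q0: "a = g + q0" by blast
    have "(\<Sum>q. c * Poly_Mapping.lookup p q when a = g + q) =
        (\<Sum>q. c * Poly_Mapping.lookup p q when q0 = q)"
      by (rule Sum_any.cong) (auto simp: q0)
    then show ?thesis using q0 by simp
  qed (simp add: when_def)
  finally show ?thesis .
qed

lemma contract_add: "contract S (p + q) = contract S p + contract S q"
  by (simp add: contract_def fun_eq_iff distrib_left lookup_add sum.distrib)

lemma contract_single_mult:
  "contract S (Poly_Mapping.single m c * p) g = c * contract S p (g + m)"
proof -
  have shift: "Poly_Mapping.single g 1 * (Poly_Mapping.single m c * p) = Poly_Mapping.single (g + m) c * p"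
    by (simp add: mult.assoc[symmetric] mult_single)
  show ?thesis
    unfolding contract_def shift sum_distrib_left by (rule sum.cong) (auto simp: lookup_single_mult)
qed

lemma contract_mult:
  "contract S (q * p) g = (\<Sum>m\<in>Poly_Mapping.keys q. Poly_Mapping.lookup q m * contract S p (g + m))"
proof -
  have contract_sum: "contract S (\<Sum>m\<in>M. f m) = (\<Sum>m\<in>M. contract S (f m))"
    for M and f :: "_ \<Rightarrow> 'a mpoly"
    by (induction M rule: infinite_finite_induct) (auto simp: contract_add fun_eq_iff contract_def)
  have "q * p = (\<Sum>m\<in>Poly_Mapping.keys q. Poly_Mapping.single m (Poly_Mapping.lookup q m) * p)"
    by (subst poly_mapping_sum_monomials) (simp add: sum_distrib_right)
  then have "contract S (q * p) g =
      (\<Sum>m\<in>Poly_Mapping.keys q. contract S (Poly_Mapping.single m (Poly_Mapping.lookup q m) * p) g)"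
    by (simp add: contract_sum sum_apply)
  then show ?thesis by (simp add: contract_single_mult)
qed

lemma linear_contract: "Vector_Spaces.linear pscale fscale (contract S :: 'k::field mpoly \<Rightarrow> _)"
proof -
  have "contract S (pscale c p) = fscale c (contract S p)" for c and p :: "'k mpoly"
    unfolding pscale_def mult_map_scale_conv_mult by (simp add: fun_eq_iff fscale_def contract_single_mult)
  then show ?thesis
    by (simp add: Vector_Spaces.linear_iff P.vector_space_axioms Fn.vector_space_axioms contract_add)
qed

lemma contract_monomial:
  "finite S \<Longrightarrow> contract S (Poly_Mapping.single b 1) = indicator (cofactors S b)"
  by (simp add: fun_eq_iff contract_def mult_single lookup_single when_def cofactors_def indicator_def
      sum.delta')

lemma contract_eq_0_if_not_divides:
  "(\<And>q. g + q \<notin> S) \<Longrightarrow> contract S p g = 0"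
  unfolding contract_def by (rule sum.neutral) (auto simp: lookup_single_mult)

lemma lookup_hpart:
  "Poly_Mapping.lookup (hpart i p) q = (if mdeg q = i then Poly_Mapping.lookup p q else 0)"
proof -
  have "Poly_Mapping.lookup (hpart i p) q =
      (\<Sum>m\<in>{m\<in>Poly_Mapping.keys p. mdeg m = i}. if m = q then Poly_Mapping.lookup p m else 0)"
    unfolding hpart_def lookup_sum lookup_single when_def by (rule sum.cong) auto
  then show ?thesis by (simp add: sum.delta in_keys_iff)
qed

lemma contract_hpart:
  assumes "S \<subseteq> mons r d"
  shows "contract S (hpart i p) g = (if mdeg g + i = d then contract S p g else 0)"
proof -
  have "mdeg g + mdeg q = d" if "g + q \<in> S" for q
    using that assms by (auto simp: mons_def)
  then show ?thesis
    unfolding contract_def by (auto intro!: sum.cong sum.neutral simp: lookup_single_mult lookup_hpart)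
qed

lemma contract_hom_comp_eq_0:
  assumes "S \<subseteq> mons r d" "p \<in> hom_comp r i" "mdeg g + i \<noteq> d"
  shows "contract S p g = 0"
  unfolding contract_def
proof (rule sum.neutral, rule ballI)
  fix a assume "a \<in> S"
  then have "mdeg a = d" using assms(1) by (auto simp: mons_def)
  then have "Poly_Mapping.lookup p q = 0" if "a = g + q" for q
    using that assms(2,3) by (auto simp: hom_comp_def in_keys_iff)
  then show "Poly_Mapping.lookup (Poly_Mapping.single g 1 * p) a = 0"
    by (auto simp: lookup_single_mult)
qed

lemma ideal_ann: "is_ideal r (ann r S :: 'k::field mpoly set)"
  unfolding is_ideal_def
proof (intro conjI ballI)
  show "ann r S \<subseteq> polyring r" "0 \<in> ann r S"
    by (auto simp: ann_def polyring_def fun_eq_iff contract_def)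
  fix p q :: "'k mpoly" assume "p \<in> ann r S" "q \<in> ann r S"
  then show "p + q \<in> ann r S" by (simp add: ann_def contract_add polyring_add)
next
  fix f p :: "'k mpoly" assume "f \<in> polyring r" "p \<in> ann r S"
  then show "f * p \<in> ann r S" by (simp add: ann_def fun_eq_iff contract_mult polyring_mult)
qed

lemma homogeneous_ideal_ann:
  assumes "S \<subseteq> mons r d"
  shows "homogeneous_ideal r (ann r S :: 'k::field mpoly set)"
  unfolding homogeneous_ideal_def
proof (intro conjI ideal_ann ballI allI)
  fix p :: "'k mpoly" and i assume p: "p \<in> ann r S"
  have "Poly_Mapping.keys (hpart i p) \<subseteq> Poly_Mapping.keys p"
    by (auto simp: in_keys_iff lookup_hpart split: if_splits)
  then show "hpart i p \<in> ann r S"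
    using p by (auto simp: ann_def polyring_def fun_eq_iff contract_hpart[OF assms])
qed

lemma hom_comp_subset_ann:
  assumes "S \<subseteq> mons r d" "d < i"
  shows "(hom_comp r i :: 'k::field mpoly set) \<subseteq> ann r S"
proof
  fix p assume p: "p \<in> hom_comp r i"
  then have "contract S p g = 0" for g
    using assms by (intro contract_hom_comp_eq_0[OF assms(1) p]) simp
  then show "p \<in> ann r S" using p by (simp add: ann_def hom_comp_def fun_eq_iff)
qed

lemma hom_comp_subset_socle_lift_ann:
  assumes "S \<subseteq> mons r d"
  shows "hom_comp r d \<subseteq> socle_lift r (ann r S)"
proof
  fix p assume p: "p \<in> hom_comp r d"
  then have "var j * p \<in> ann r S" if "j < r" for j
    using var_mult_in_hom_comp[OF p that] hom_comp_subset_ann[OF assms, of "Suc d"] by blast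
  then show "p \<in> socle_lift r (ann r S)" using p by (simp add: socle_lift_def hom_comp_def)
qed

lemma hom_comp_inter_socle_lift_ann_below:
  assumes S: "S \<subseteq> mons r d" and "i < d"
  shows "hom_comp r i \<inter> socle_lift r (ann r S) = hom_comp r i \<inter> ann r S"
proof (intro equalityI subsetI)
  fix p assume "p \<in> hom_comp r i \<inter> ann r S"
  moreover have "var j * p \<in> ann r S" if "j < r" for j
    using calculation ideal_ann[of r S] var_in_polyring[OF that] unfolding is_ideal_def by blast
  ultimately show "p \<in> hom_comp r i \<inter> socle_lift r (ann r S)"
    by (simp add: socle_lift_def hom_comp_def)
next
  fix p assume p: "p \<in> hom_comp r i \<inter> socle_lift r (ann r S)"
  have "contract S p g = 0" for g
  proof (cases "g \<noteq> 0 \<and> (\<exists>q. g + q \<in> S)")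
    case False
    then consider "g = 0" | "\<And>q. g + q \<notin> S" by blast
    then show ?thesis
    proof cases
      case 1
      then show ?thesis using contract_hom_comp_eq_0[OF S, of p i g] p \<open>i < d\<close> by simp
    qed (rule contract_eq_0_if_not_divides)
  next
    case True
    then obtain j q where j: "j \<in> Poly_Mapping.keys g" and q: "g + q \<in> S"
      by (metis ex_in_conv keys_eq_empty)
    then have "j < r" using S by (fastforce simp: mons_def keys_add_nat)
    define g' where "g' = g - Poly_Mapping.single j 1"
    have "g = g' + Poly_Mapping.single j 1"
      using j by (intro poly_mapping_eqI)
        (auto simp: g'_def lookup_add lookup_minus lookup_single when_def in_keys_iff)
    moreover have "contract S (var j * p) g' = 0"
      using p \<open>j < r\<close> by (auto simp: socle_lift_def ann_def)
    ultimately show ?thesis by (simp add: var_def contract_single_mult)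
  qed
  then show "p \<in> hom_comp r i \<inter> ann r S"
    using p by (auto simp: ann_def hom_comp_def fun_eq_iff)
qed

lemma hilb_ann_eq_card_cofactors:
  assumes S: "finite S"
    and disj: "\<And>b b'. b \<in> mons r i \<Longrightarrow> b' \<in> mons r i \<Longrightarrow>
      cofactors S b \<inter> cofactors S b' \<noteq> {} \<Longrightarrow> cofactors S b = cofactors S b'"
  shows "hilb r (ann r S :: 'k::field mpoly set) i = card (cofactors S ` mons r i - {{}})"
proof -
  let ?V = "hom_comp r i :: 'k mpoly set"
  let ?M = "(\<lambda>m. Poly_Mapping.single m (1::'k)) ` mons r i"
  let ?ind = "\<lambda>T. indicator T :: (nat \<Rightarrow>\<^sub>0 nat) \<Rightarrow> 'k"
  have "P.dim ?V = P.dim {p\<in>?V. contract S p = 0} + Fn.dim (contract S ` ?V)"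
    by (rule PFn.dim_kernel_plus_dim_image[OF linear_contract subspace_hom_comp _ hom_comp_subset_span_mons])
      (simp add: finite_mons)
  moreover have "{p\<in>?V. contract S p = 0} = ?V \<inter> ann r S"
    by (auto simp: ann_def hom_comp_def)
  moreover have "Fn.dim (contract S ` ?V) = card (cofactors S ` mons r i - {{}})"
  proof -
    have "P.span ?V = P.span ?M"
      using hom_comp_subset_span_mons monomial_in_hom_comp P.span_superset
      by (intro iffD2[OF P.span_eq]) blast
    moreover have "contract S ` ?M = ?ind ` cofactors S ` mons r i"
      by (auto simp: image_image contract_monomial[OF S])
    ultimately have "Fn.span (contract S ` ?V) = Fn.span (?ind ` cofactors S ` mons r i)"
      by (metis PFn.linear_span_image[OF linear_contract])
    then have "Fn.dim (contract S ` ?V) = Fn.dim (?ind ` cofactors S ` mons r i)"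
      by (rule Fn.span_eq_dim)
    also have "\<dots> = card (cofactors S ` mons r i - {{}})"
      using disj by (intro dim_indicators_disjoint) (auto simp: finite_mons pairwise_def disjnt_def)
    finally show ?thesis .
  qed
  ultimately show ?thesis by (simp add: hilb_def pdim_def)
qed

lemma hilb_ann_top_degree:
  assumes S: "S \<subseteq> mons r d" "finite S" "S \<noteq> {}"
  shows "hilb r (ann r S :: 'k::field mpoly set) d = 1"
proof -
  have cof: "cofactors S b = (if b \<in> S then {0} else {})" if "b \<in> mons r d" for b
  proof -
    have "g = 0" if "g + b \<in> S" for g
      using that S(1) \<open>b \<in> mons r d\<close> by (auto simp: mons_def)
    then show ?thesis by (auto simp: cofactors_def) (metis add.left_neutral)
  qed
  have "cofactors S ` mons r d - {{}} = {{0}}"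
    using cof S by (auto simp: image_iff)
  moreover have "hilb r (ann r S :: 'k mpoly set) d = card (cofactors S ` mons r d - {{}})"
    by (rule hilb_ann_eq_card_cofactors) (use S cof in \<open>auto split: if_splits\<close>)
  ultimately show ?thesis by simp
qed

theorem AG_algebra_ann:
  assumes S: "S \<subseteq> mons r d" "finite S" "S \<noteq> {}"
  shows "AG_algebra r (ann r S :: 'k::field mpoly set) d"
proof -
  let ?I = "ann r S :: 'k mpoly set"
  have "socle_dim r ?I d =
      (\<Sum>i\<in>insert d {..<d}. pdim (hom_comp r i \<inter> socle_lift r ?I) - pdim (hom_comp r i \<inter> ?I))"
    unfolding socle_dim_def by (rule sum.cong) auto
  also have "\<dots> = pdim (hom_comp r d \<inter> socle_lift r ?I) - pdim (hom_comp r d \<inter> ?I)"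
    by (simp add: hom_comp_inter_socle_lift_ann_below[OF S(1)])
  also have "\<dots> = hilb r ?I d"
    by (simp add: hilb_def Int_absorb2[OF hom_comp_subset_socle_lift_ann[OF S(1)]])
  finally show ?thesis
    using hilb_ann_top_degree[OF S] homogeneous_ideal_ann[OF S(1)] hom_comp_subset_ann[OF S(1)]
    by (auto simp: AG_algebra_def artinian_socle_degree_def)
qed

section \<open>The construction\<close>

text \<open>Variables \<open>j < n\<close> play the role of the \<open>x\<close>'s and variables \<open>n \<le> k < r\<close> of the
  \<open>y\<close>'s; \<open>S\<close> is the support of \<open>F = \<Sum>a. x\<^sup>a y\<^bsub>idx a\<^esub> + \<Sum>k\<in>Z. y\<^sub>k\<^sup>d\<close>, with \<open>a\<close>
  ranging over the monomials of degree \<open>d - 1\<close> in the \<open>x\<close>'s.\<close>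

locale monomial_doubling =
  fixes n d r :: nat and idx :: "(nat \<Rightarrow>\<^sub>0 nat) \<Rightarrow> nat"
  assumes n_pos: "0 < n" and d_pos: "0 < d"
    and inj_idx: "inj_on idx (mons n (d - 1))"
    and idx_range: "idx ` mons n (d - 1) \<subseteq> {n..<r}"
begin

definition Y :: "nat set" where
  "Y = idx ` mons n (d - 1)"

definition Z :: "nat set" where
  "Z = {n..<r} - Y"

definition S :: "(nat \<Rightarrow>\<^sub>0 nat) set" where
  "S = (\<lambda>a. a + Poly_Mapping.single (idx a) 1) ` mons n (d - 1) \<union>
    (\<lambda>k. Poly_Mapping.single k d) ` Z"

lemma S_cases:
  assumes "s \<in> S"
  obtains (x) a where "a \<in> mons n (d - 1)" "s = a + Poly_Mapping.single (idx a) 1"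
    | (y) k where "k \<in> Z" "s = Poly_Mapping.single k d"
  using assms unfolding S_def by blast

lemma n_less_r: "n < r"
  using idx_range single_in_mons[OF n_pos, of "d - 1"] by fastforce

lemma idx_bounds: "a \<in> mons n (d - 1) \<Longrightarrow> n \<le> idx a \<and> idx a < r"
  using idx_range by fastforce

lemma Y_Z_subset_disjoint: "Y \<subseteq> {n..<r}" "Z \<subseteq> {n..<r}" "Y \<inter> Z = {}"
  using idx_range by (auto simp: Y_def Z_def)

lemma finite_S: "finite S"
  using Y_Z_subset_disjoint by (simp add: S_def finite_mons finite_subset)

lemma S_nonempty: "S \<noteq> {}"
  using single_in_mons[OF n_pos] by (auto simp: S_def)

lemma S_subset_mons: "S \<subseteq> mons r d"
proof
  fix s assume "s \<in> S"
  then show "s \<in> mons r d"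
  proof (cases rule: S_cases)
    case (x a)
    then have "Poly_Mapping.keys a \<subseteq> {..<n}" "n \<le> idx a" "idx a < r" "mdeg a = d - 1"
      using idx_bounds by (auto simp: mons_def)
    then show ?thesis using x n_less_r d_pos by (auto simp: mons_def keys_add_nat)
  qed (use Y_Z_subset_disjoint in \<open>auto simp: mons_def\<close>)
qed

lemma lookup_S_at_y:
  assumes "a \<in> mons n (d - 1)" "n \<le> v"
  shows "Poly_Mapping.lookup (a + Poly_Mapping.single (idx a) 1) v = (if v = idx a then 1 else 0)"
  using assms by (simp add: lookup_add lookup_single lookup_mons_above)

lemma S_has_y_variable: "s \<in> S \<Longrightarrow> \<exists>v\<ge>n. 0 < Poly_Mapping.lookup s v"
proof (induction rule: S_cases)
  case (x a)
  then show ?case using idx_bounds lookup_S_at_y[OF x(1)] by (intro exI[of _ "idx a"]) auto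
next
  case (y k)
  then show ?case using Y_Z_subset_disjoint d_pos by (intro exI[of _ k]) auto
qed

lemma S_determined_by_y_variable:
  assumes "s \<in> S" "t \<in> S" "n \<le> v" "0 < Poly_Mapping.lookup s v" "0 < Poly_Mapping.lookup t v"
  shows "s = t"
proof -
  have y_of_x: "v = idx a \<and> v \<in> Y" if "a \<in> mons n (d - 1)" "u = a + Poly_Mapping.single (idx a) 1"
    "0 < Poly_Mapping.lookup u v" for a u
    using that lookup_S_at_y[OF that(1) assms(3)] by (auto simp: Y_def split: if_splits)
  have y_of_y: "v = k" if "u = Poly_Mapping.single k d" "0 < Poly_Mapping.lookup u v" for k u
    using that by (auto simp: lookup_single when_def split: if_splits)
  show ?thesis using assms(1)
  proof (cases rule: S_cases)
    case (x a)
    show ?thesis using assms(2)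
    proof (cases rule: S_cases)
      case (x b)
      then show ?thesis using \<open>s = _\<close> \<open>a \<in> _\<close> y_of_x assms(4,5) inj_idx by (metis inj_onD)
    next
      case (y k)
      then show ?thesis using x y_of_x y_of_y assms(4,5) Y_Z_subset_disjoint(3) by blast
    qed
  next
    case (y k)
    show ?thesis using assms(2)
    proof (cases rule: S_cases)
      case (x b)
      then show ?thesis using y y_of_x y_of_y assms(4,5) Y_Z_subset_disjoint(3) by blast
    next
      case (y k')
      then show ?thesis using \<open>s = _\<close> y_of_y assms(4,5) by metis
    qed
  qed
qed

lemma cofactors_singleton_if_y:
  assumes "n \<le> v" "0 < Poly_Mapping.lookup b v" "g \<in> cofactors S b"
  shows "cofactors S b = {g}"
proof -
  have "g' = g" if "g' \<in> cofactors S b" for g'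
    using S_determined_by_y_variable[of "g' + b" "g + b" v] that assms by (auto simp: cofactors_def lookup_add)
  then show ?thesis using assms(3) by blast
qed

lemma cofactors_overlap:
  assumes "g \<in> cofactors S b" "g \<in> cofactors S b'"
  shows "cofactors S b = cofactors S b'"
proof (cases "\<exists>v\<ge>n. 0 < Poly_Mapping.lookup g v")
  case True
  then obtain v where "n \<le> v" "0 < Poly_Mapping.lookup g v" by blast
  then have "g + b = g + b'"
    using S_determined_by_y_variable[of "g + b" "g + b'" v] assms by (auto simp: cofactors_def lookup_add)
  then show ?thesis by simp
next
  case False
  have "cofactors S c = {g}" if c: "g \<in> cofactors S c" for c
  proof -
    obtain v where "n \<le> v" "0 < Poly_Mapping.lookup (g + c) v"
      using S_has_y_variable c by (auto simp: cofactors_def)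
    then show ?thesis using False cofactors_singleton_if_y[OF _ _ c] by (auto simp: lookup_add)
  qed
  then show ?thesis using assms by metis
qed

lemma cofactors_x_monomial_nonempty:
  assumes "b \<in> mons n i" "i < d"
  shows "cofactors S b \<noteq> {}"
proof -
  define a where "a = b + Poly_Mapping.single 0 (d - 1 - i)"
  have "a \<in> mons n (d - 1)"
    using assms n_pos by (auto simp: a_def mons_def keys_add_nat)
  moreover have "Poly_Mapping.single 0 (d - 1 - i) + Poly_Mapping.single (idx a) 1 + b
      = a + Poly_Mapping.single (idx a) 1"
    by (simp add: a_def ac_simps)
  ultimately have "Poly_Mapping.single 0 (d - 1 - i) + Poly_Mapping.single (idx a) 1 \<in> cofactors S b"
    unfolding cofactors_def S_def by auto
  then show ?thesis by blast
qed

lemma cofactors_x_monomial_has_Y: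
  assumes "b \<in> mons n i" "0 < i" "g \<in> cofactors S b"
  shows "\<exists>v\<in>Y. 0 < Poly_Mapping.lookup g v"
  using assms(3) unfolding cofactors_def mem_Collect_eq
proof (cases rule: S_cases)
  case (x a)
  then have "Poly_Mapping.lookup (g + b) (idx a) = 1"
    using idx_bounds lookup_S_at_y by auto
  then have "Poly_Mapping.lookup g (idx a) = 1"
    using idx_bounds[OF x(1)] lookup_mons_above[OF assms(1)] by (simp add: lookup_add)
  then show ?thesis using x(1) by (intro bexI[of _ "idx a"]) (auto simp: Y_def)
next
  case (y k)
  have "Poly_Mapping.lookup b v = 0" for v
  proof (cases "n \<le> v")
    case False
    then have "v \<noteq> k" using y Y_Z_subset_disjoint by auto
    then show ?thesis
      using arg_cong[OF y(2), of "\<lambda>m. Poly_Mapping.lookup m v"] by (simp add: lookup_add lookup_single)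
  qed (rule lookup_mons_above[OF assms(1)])
  then have "b = 0" by (simp add: poly_mapping_eq_iff fun_eq_iff)
  then show ?thesis using assms(1,2) by (simp add: mons_def)
qed

lemma cofactors_y_monomial:
  assumes b: "b \<in> mons r i" and v: "n \<le> v" "0 < Poly_Mapping.lookup b v" and g: "g \<in> cofactors S b"
  shows "g \<in> mons n (d - i) \<union> (\<lambda>k. Poly_Mapping.single k (d - i)) ` Z"
proof -
  have gb: "g + b \<in> S" using g by (simp add: cofactors_def)
  then have deg: "mdeg g = d - i" using S_subset_mons b by (auto simp: mons_def)
  from gb show ?thesis
  proof (cases rule: S_cases)
    case (x a)
    have sum: "Poly_Mapping.lookup g u + Poly_Mapping.lookup b u = (if u = idx a then 1 else 0)"
      if "n \<le> u" for u
      using lookup_S_at_y[OF x(1) that] unfolding x(2)[symmetric] by (simp only: lookup_add)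
    then have "v = idx a" "Poly_Mapping.lookup g v = 0"
      using sum[OF v(1)] v(2) by (auto split: if_splits)
    then have "Poly_Mapping.lookup g w = 0" if "n \<le> w" for w
      using sum[OF that] by (cases "w = idx a") auto
    then have "Poly_Mapping.keys g \<subseteq> {..<n}"
      by (auto simp: in_keys_iff not_less[symmetric])
    then show ?thesis using deg by (simp add: mons_def)
  next
    case (y k)
    have "Poly_Mapping.lookup g w = 0" if "w \<noteq> k" for w
      using arg_cong[OF y(2), of "\<lambda>m. Poly_Mapping.lookup m w"] that
      by (simp add: lookup_add lookup_single)
    then have "g = Poly_Mapping.single k (d - i)"
      using deg mdeg_single[of k "Poly_Mapping.lookup g k"]
      by (metis (mono_tags, lifting) lookup_single_eq lookup_single_not_eq poly_mapping_eqI)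
    then show ?thesis using y(1) by blast
  qed
qed

lemma singleton_cofactors_x:
  assumes g: "g \<in> mons n (d - i)" and i: "0 < i" "i \<le> d"
  shows "\<exists>b\<in>mons r i. cofactors S b = {g}"
proof -
  define a where "a = g + Poly_Mapping.single 0 (i - 1)"
  define b where "b = Poly_Mapping.single 0 (i - 1) + Poly_Mapping.single (idx a) 1"
  have a: "a \<in> mons n (d - 1)" using g i n_pos by (auto simp: a_def mons_def keys_add_nat)
  then have "b \<in> mons r i" using idx_bounds[of a] n_less_r i by (auto simp: b_def mons_def keys_add_nat)
  moreover have "g + b = a + Poly_Mapping.single (idx a) 1" by (simp add: a_def b_def ac_simps)
  then have "g \<in> cofactors S b" using a by (auto simp: cofactors_def S_def)
  then have "cofactors S b = {g}"
    using idx_bounds[OF a] by (intro cofactors_singleton_if_y[of "idx a"]) (auto simp: b_def lookup_add)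
  ultimately show ?thesis by blast
qed

lemma singleton_cofactors_y:
  assumes k: "k \<in> Z" and i: "0 < i" "i \<le> d"
  shows "\<exists>b\<in>mons r i. cofactors S b = {Poly_Mapping.single k (d - i)}"
proof -
  have "Poly_Mapping.single k (d - i) + Poly_Mapping.single k i = Poly_Mapping.single k d"
    using i by (simp flip: single_add)
  then have "Poly_Mapping.single k (d - i) \<in> cofactors S (Poly_Mapping.single k i)"
    using k by (auto simp: cofactors_def S_def)
  moreover have "Poly_Mapping.single k i \<in> mons r i" using k Y_Z_subset_disjoint by (auto simp: mons_def)
  ultimately show ?thesis
    using k Y_Z_subset_disjoint i by (intro bexI cofactors_singleton_if_y[of k]) auto
qed

lemma nonempty_cofactors_eq:
  assumes i: "0 < i" "i < d"
  shows "cofactors S ` mons r i - {{}} = cofactors S ` mons n i \<union>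
    (\<lambda>g. {g}) ` (mons n (d - i) \<union> (\<lambda>k. Poly_Mapping.single k (d - i)) ` Z)"
    (is "_ = ?R")
proof (intro equalityI subsetI)
  fix T assume "T \<in> cofactors S ` mons r i - {{}}"
  then obtain b g where b: "b \<in> mons r i" "T = cofactors S b" and g: "g \<in> T" by blast
  show "T \<in> ?R"
  proof (cases "Poly_Mapping.keys b \<subseteq> {..<n}")
    case True
    then have "b \<in> mons n i" using b(1) by (simp add: mons_def)
    then show ?thesis using b(2) by blast
  next
    case False
    then obtain v where v: "n \<le> v" "0 < Poly_Mapping.lookup b v"
      by (auto simp: in_keys_iff subset_iff not_less)
    have "T = {g}" using cofactors_singleton_if_y[OF v] b g by simp
    moreover have "g \<in> mons n (d - i) \<union> (\<lambda>k. Poly_Mapping.single k (d - i)) ` Z"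
      using cofactors_y_monomial[OF b(1) v] b g by simp
    ultimately show ?thesis by blast
  qed
next
  fix T assume "T \<in> ?R"
  then consider (x) b where "b \<in> mons n i" "T = cofactors S b"
    | (x') g where "g \<in> mons n (d - i)" "T = {g}"
    | (y) k where "k \<in> Z" "T = {Poly_Mapping.single k (d - i)}"
    by blast
  then show "T \<in> cofactors S ` mons r i - {{}}"
  proof cases
    case x
    then show ?thesis
      using cofactors_x_monomial_nonempty i mons_mono[OF less_imp_le[OF n_less_r]] by blast
  next
    case x'
    then obtain b where "b \<in> mons r i" "cofactors S b = {g}"
      using singleton_cofactors_x i by (meson less_imp_le)
    then show ?thesis using x' by auto
  next
    case y
    then obtain b where "b \<in> mons r i" "cofactors S b = {Poly_Mapping.single k (d - i)}"
      using singleton_cofactors_y i by (meson less_imp_le)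
    then show ?thesis using y by auto
  qed
qed

lemma inj_on_cofactors_x_monomials:
  assumes i: "0 < i" "i < d"
  shows "inj_on (cofactors S) (mons n i)"
proof (rule inj_onI)
  fix b b' assume b: "b \<in> mons n i" "b' \<in> mons n i" and eq: "cofactors S b = cofactors S b'"
  obtain g where g: "g \<in> cofactors S b" using cofactors_x_monomial_nonempty[OF b(1) i(2)] by blast
  then obtain v where v: "v \<in> Y" "0 < Poly_Mapping.lookup g v"
    using cofactors_x_monomial_has_Y[OF b(1) i(1)] by blast
  moreover have "g \<in> cofactors S b'" using g eq by simp
  moreover have "n \<le> v" using v(1) Y_Z_subset_disjoint(1) by auto
  ultimately have "g + b = g + b'"
    using S_determined_by_y_variable[of "g + b" "g + b'" v] g v(2) by (simp add: cofactors_def lookup_add)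
  then show "b = b'" by simp
qed

lemma card_Z: "card Z = r - n - card (mons n (d - 1))"
proof -
  have "card Y = card (mons n (d - 1))"
    unfolding Y_def by (rule card_image[OF inj_idx])
  then show ?thesis
    unfolding Z_def using Y_Z_subset_disjoint(1) by (simp add: card_Diff_subset finite_subset)
qed

lemma card_mons_d_minus_1_le: "card (mons n (d - 1)) \<le> r - n"
  using card_image[OF inj_idx] card_mono[OF _ Y_Z_subset_disjoint(1)] by (simp add: Y_def)

lemma hilb_ann_S_eq:
  assumes i: "0 < i" "i < d"
  shows "hilb r (ann r S :: 'k::field mpoly set) i = card (mons n i) + card (mons n (d - i)) + card Z"
proof -
  let ?P = "(\<lambda>k. Poly_Mapping.single k (d - i)) ` Z"
  have fin: "finite (mons n (d - i) \<union> ?P)" "finite Z"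
    using Y_Z_subset_disjoint(2) finite_subset by (auto simp: finite_mons)
  have disj_x: "cofactors S ` mons n i \<inter> (\<lambda>g. {g}) ` (mons n (d - i) \<union> ?P) = {}"
  proof -
    have False
      if b: "b \<in> mons n i" and g: "g \<in> mons n (d - i) \<union> ?P" and "cofactors S b = {g}" for b g
    proof -
      obtain v where "v \<in> Y" "0 < Poly_Mapping.lookup g v"
        using cofactors_x_monomial_has_Y[OF b i(1)] \<open>cofactors S b = {g}\<close> by blast
      then show False
        using g Y_Z_subset_disjoint lookup_mons_above by (auto simp: lookup_single when_def split: if_splits)
    qed
    then show ?thesis by blast
  qed
  have disj_y: "mons n (d - i) \<inter> ?P = {}"
    using Y_Z_subset_disjoint(2) i lookup_mons_above by fastforce
  have inj_P: "inj_on (\<lambda>k. Poly_Mapping.single k (d - i)) Z"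
    using i by (intro inj_onI) (metis lookup_single_eq lookup_single_not_eq zero_less_diff less_irrefl)
  have "hilb r (ann r S :: 'k mpoly set) i = card (cofactors S ` mons r i - {{}})"
    using cofactors_overlap by (intro hilb_ann_eq_card_cofactors finite_S) blast
  also have "\<dots> = card (cofactors S ` mons n i) + card ((\<lambda>g. {g}) ` (mons n (d - i) \<union> ?P))"
    unfolding nonempty_cofactors_eq[OF i] using disj_x fin by (intro card_Un_disjoint) (auto simp: finite_mons)
  also have "\<dots> = card (mons n i) + card (mons n (d - i)) + card Z"
    using inj_on_cofactors_x_monomials[OF i] disj_y fin inj_P
    by (simp add: card_image card_Un_disjoint finite_mons)
  finally show ?thesis .
qed

lemma hilb_ann_S_one:
  assumes "1 < d"
  shows "hilb r (ann r S :: 'k::field mpoly set) 1 = r"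
proof -
  have "hilb r (ann r S :: 'k mpoly set) 1 = n + card (mons n (d - 1)) + card Z"
    using hilb_ann_S_eq[of 1] assms card_mons_one[of n] by simp
  then show ?thesis using card_Z card_mons_d_minus_1_le n_less_r by linarith
qed

end

lemma card_mons_three: "2 * card (mons 3 k) = (k + 1) * (k + 2)"
proof -
  let ?f = "\<lambda>m :: nat \<Rightarrow>\<^sub>0 nat. (Poly_Mapping.lookup m 0, Poly_Mapping.lookup m 1)"
  have deg: "mdeg m = Poly_Mapping.lookup m 0 + Poly_Mapping.lookup m 1 + Poly_Mapping.lookup m 2"
    if "m \<in> mons 3 k" for m :: "nat \<Rightarrow>\<^sub>0 nat"
  proof -
    have "{..<3::nat} = {0, 1, 2}" by auto
    then show ?thesis using that mdeg_eq_sum[of "{0, 1, 2}" m] by (simp add: mons_def)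
  qed
  have "inj_on ?f (mons 3 k)"
  proof (rule inj_onI)
    fix m m' assume m: "m \<in> mons 3 k" "m' \<in> mons 3 k" and eq: "?f m = ?f m'"
    have "Poly_Mapping.lookup m j = Poly_Mapping.lookup m' j" for j
    proof -
      have "mdeg m = k" "mdeg m' = k" using m by (simp_all add: mons_def)
      moreover have "Poly_Mapping.lookup m 0 = Poly_Mapping.lookup m' 0"
        and "Poly_Mapping.lookup m 1 = Poly_Mapping.lookup m' 1" using eq by simp_all
      ultimately have "Poly_Mapping.lookup m 2 = Poly_Mapping.lookup m' 2"
        using deg[OF m(1)] deg[OF m(2)] by simp
      show ?thesis
      proof (cases "3 \<le> j")
        case True
        then show ?thesis using lookup_mons_above[OF m(1) True] lookup_mons_above[OF m(2) True] by simp
      next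
        case False
        then consider "j = 0" | "j = 1" | "j = 2" by linarith
        then show ?thesis using eq \<open>Poly_Mapping.lookup m 2 = _\<close> by cases simp_all
      qed
    qed
    then show "m = m'" by (rule poly_mapping_eqI)
  qed
  moreover have "?f ` mons 3 k = Sigma {..k} (\<lambda>a. {..k - a})"
  proof (intro equalityI subsetI)
    fix p assume "p \<in> ?f ` mons 3 k"
    then obtain m where m: "m \<in> mons 3 k" "p = ?f m" by blast
    then have "mdeg m = k" by (simp add: mons_def)
    then show "p \<in> Sigma {..k} (\<lambda>a. {..k - a})" using deg[OF m(1)] m(2) by auto
  next
    fix p assume "p \<in> Sigma {..k} (\<lambda>a. {..k - a})"
    then obtain a b where ab: "p = (a, b)" "a + b \<le> k" by auto
    define m :: "nat \<Rightarrow>\<^sub>0 nat"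
      where "m = Poly_Mapping.single 0 a + Poly_Mapping.single 1 b + Poly_Mapping.single 2 (k - a - b)"
    have "m \<in> mons 3 k" using ab by (simp add: m_def mons_def keys_add_nat)
    moreover have "?f m = p" using ab by (simp add: m_def lookup_add lookup_single)
    ultimately show "p \<in> ?f ` mons 3 k" by blast
  qed
  ultimately have "card (mons 3 k) = card (Sigma {..k} (\<lambda>a. {..k - a}))"
    using card_image by fastforce
  also have "\<dots> = (\<Sum>a<Suc k. Suc (k - a))"
    by (simp add: lessThan_Suc_atMost)
  also have "\<dots> = (\<Sum>a<Suc k. Suc a)"
    using sum.nat_diff_reindex[of "\<lambda>a. Suc a" "Suc k"] by simp
  finally have card: "card (mons 3 k) = (\<Sum>a<Suc k. Suc a)" .
  have "2 * (\<Sum>a<j. Suc a) = j * (j + 1)" for j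
    by (induction j) simp_all
  then show ?thesis using card by simp
qed

lemma card_mons_three_strict_convex:
  assumes "Suc i < m"
  shows "card (mons 3 (Suc i)) + card (mons 3 (m - 1)) < card (mons 3 i) + card (mons 3 m)"
proof -
  obtain t where m: "m = i + t + 2" using less_imp_Suc_add[OF assms] by auto
  have "(i + 2) * (i + 3) + (i + t + 2) * (i + t + 3) < (i + 1) * (i + 2) + (i + t + 3) * (i + t + 4)"
    by (simp add: algebra_simps)
  then show ?thesis
    using card_mons_three[of i] card_mons_three[of "Suc i"] card_mons_three[of m]
      card_mons_three[of "m - 1"]
    by (simp add: m add.assoc)
qed

theorem corollary2p4:
  fixes d :: nat
  assumes "d \<ge> 4"
  shows "\<exists>r0::nat. r0 > 0 \<and> (\<forall>r\<ge>r0. \<exists>I :: ('k::field_char_0) mpoly set.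
           AG_algebra r I d \<and> hilb r I 1 = r \<and>
           (\<forall>i. 1 \<le> i \<and> i < d div 2 \<longrightarrow> hilb r I (Suc i) < hilb r I i))"
proof (intro exI[of _ "3 + card (mons 3 (d - 1))"] conjI allI impI)
  fix r assume r: "3 + card (mons 3 (d - 1)) \<le> r"
  then have "card (mons 3 (d - 1)) \<le> card {3..<r}" by simp
  then obtain idx where "idx ` mons 3 (d - 1) \<subseteq> {3..<r}" "inj_on idx (mons 3 (d - 1))"
    using card_le_inj[OF finite_mons finite_atLeastLessThan] by blast
  then interpret monomial_doubling 3 d r idx
    using assms by unfold_locales auto
  have "hilb r (ann r S :: 'k mpoly set) (Suc i) < hilb r (ann r S :: 'k mpoly set) i"
    if "1 \<le> i" "i < d div 2" for i
  proof -
    have i: "0 < i" "Suc i < d" "Suc i < d - i" using that by auto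
    then have "d - Suc i = d - i - 1" by simp
    then show ?thesis
      using hilb_ann_S_eq[where 'k='k, of i] hilb_ann_S_eq[where 'k='k, of "Suc i"]
        card_mons_three_strict_convex[OF i(3)] i
      by simp
  qed
  then show "\<exists>I :: 'k mpoly set. AG_algebra r I d \<and> hilb r I 1 = r \<and>
      (\<forall>i. 1 \<le> i \<and> i < d div 2 \<longrightarrow> hilb r I (Suc i) < hilb r I i)"
    using AG_algebra_ann[OF S_subset_mons finite_S S_nonempty] hilb_ann_S_one assms by auto
qed simp

end
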